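(* Let $X_1,X_2,Y_1,Y_2$ be totally ordered alphabets. For every $M\in\mathrm{Pack}$, \[\iota_{(X_1,X_2),(Y_1,Y_2)}\big(\Phi_M(X_1X_2,Y_1Y_2)\big)=\sum_{\substack{(\sigma',\sigma'')\in \mathrm{Adm}(\mathrm{row}(M))\\ (\tau',\tau'')\in \mathrm{Adm}(\mathrm{col}(M))}} \Phi_{\mu(\sigma')M\mu(\tau')^\top}(X_1,Y_1)\otimes \Phi_{\mu(\sigma'')M\mu(\tau'')^\top}(X_2,Y_2).\]
   Context: A totally ordered alphabet is a finite or countable set with a total order. $\mathbf{A}_{X,Y}=\mathbb{Q}[[t_{i,j}\mid i\in X,\ j\in Y]]$. A packed matrix is a matrix with entries in $\mathbb{N}$ with no zero row and no zero column (the empty matrix $1$ is packed); $\mathrm{Pack}$ is their set; $\mathrm{row}(M),\mathrm{col}(M)$ are the numbers of rows and columns. For $M=(m_{r,s})\in\mathrm{Pack}$ with $k$ rows and $l$ columns, $\Phi_M(X,Y)=\sum_{i_1<\dots<i_k\in X,\ j_1<\dots<j_l\in Y}\prod_{r,s} t_{i_r,j_s}^{m_{r,s}}$, extended linearly. For $\alpha:[k]\to[n]$, $\mu(\alpha)$ is the $n\times k$ matrix with $\mu(\alpha)_{i,j}=\delta_{i,\alpha(j)}$. $XY$ denotes $X\times Y$ with the lexicographic order ($(x,y)\leq(x',y')$ iff $x<x'$, or $x=x'$ and $y\leq y'$). $\iota_{(X_1,X_2),(Y_1,Y_2)}:\mathbf{A}_{X_1X_2,Y_1Y_2}\to\mathbf{A}_{X_1,Y_1}\hat\otimes\mathbf{A}_{X_2,Y_2}$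 is the continuous algebra map $t_{(x_1,x_2),(y_1,y_2)}\mapsto t_{x_1,y_1}\otimes t_{x_2,y_2}$. For $k\in\mathbb{N}$, $\mathrm{Adm}(k)$ is the set of pairs $(\sigma',\sigma'')$ of surjective maps $\sigma':[k]\twoheadrightarrow[k']$, $\sigma'':[k]\twoheadrightarrow[k'']$ (some $k',k''$) such that $\sigma'(1)\leq\dots\leq\sigma'(k)$ and, for all $i<j$ in $[k]$ with $\sigma'(i)=\sigma'(j)$, one has $\sigma''(i)<\sigma''(j)$. *)

theory Defs
  imports "Jordan_Normal_Form.Matrix" "HOL-Library.Product_Lexorder" "HOL-Library.Countable_Set"
begin

text \<open>Formal power series over Q in commuting variables t_v (v :: 'v) are represented by their
coefficient function on monomials (exponent functions 'v \<Rightarrow> nat); only finitely supported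
exponent functions are genuine monomials, all other coefficients are 0 in the series used below.
An element of A_{X,Y} has variables indexed by pairs (i,j).\<close>

type_synonym ('x,'y) pseries = "('x \<times> 'y \<Rightarrow> nat) \<Rightarrow> rat"

text \<open>Completed tensor product A_{X1,Y1} (hat-tensor) A_{X2,Y2}: power series in the
disjoint union of both variable sets, i.e. coefficient functions on pairs of monomials.\<close>

type_synonym ('x1,'y1,'x2,'y2) tpseries = "('x1 \<times> 'y1 \<Rightarrow> nat) \<times> ('x2 \<times> 'y2 \<Rightarrow> nat) \<Rightarrow> rat"

definition tensor :: "('x1,'y1) pseries \<Rightarrow> ('x2,'y2) pseries \<Rightarrow> ('x1,'y1,'x2,'y2) tpseries" where
  "tensor f g = (\<lambda>(m1, m2). f m1 * g m2)"

definition packed :: "nat mat \<Rightarrow> bool" where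
  "packed M \<longleftrightarrow> (\<forall>r<dim_row M. \<exists>s<dim_col M. M $$ (r,s) \<noteq> 0)
              \<and> (\<forall>s<dim_col M. \<exists>r<dim_row M. M $$ (r,s) \<noteq> 0)"

definition monom_of :: "nat mat \<Rightarrow> 'x list \<Rightarrow> 'y list \<Rightarrow> ('x \<times> 'y \<Rightarrow> nat)" where
  "monom_of M is js = (\<lambda>(i,j). \<Sum>r<dim_row M. \<Sum>s<dim_col M.
       if is ! r = i \<and> js ! s = j then M $$ (r,s) else 0)"

text \<open>Phi_M(X,Y) = sum over i_1<...<i_k in X, j_1<...<j_l in Y of that monomial;
its coefficient at m is the number of such pairs of sequences producing m.\<close>

definition Phi :: "nat mat \<Rightarrow> 'x::linorder set \<Rightarrow> 'y::linorder set \<Rightarrow> ('x,'y) pseries" where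
  "Phi M X Y = (\<lambda>m. of_nat (card {(is, js).
       length is = dim_row M \<and> sorted_wrt (<) is \<and> set is \<subseteq> X \<and>
       length js = dim_col M \<and> sorted_wrt (<) js \<and> set js \<subseteq> Y \<and>
       monom_of M is js = m}))"

text \<open>The algebra map iota: t_{(x1,x2),(y1,y2)} \<mapsto> t_{x1,y1} \<otimes> t_{x2,y2}, on coefficients.
The monomial t^m is sent to the pair of monomials (proj1 m, proj2 m).\<close>

definition proj1 :: "(('x1 \<times> 'x2) \<times> ('y1 \<times> 'y2) \<Rightarrow> nat) \<Rightarrow> ('x1 \<times> 'y1 \<Rightarrow> nat)" where
  "proj1 m = (\<lambda>(x1,y1). \<Sum>v\<in>{v. m v \<noteq> 0 \<and> fst (fst v) = x1 \<and> fst (snd v) = y1}. m v)"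

definition proj2 :: "(('x1 \<times> 'x2) \<times> ('y1 \<times> 'y2) \<Rightarrow> nat) \<Rightarrow> ('x2 \<times> 'y2 \<Rightarrow> nat)" where
  "proj2 m = (\<lambda>(x2,y2). \<Sum>v\<in>{v. m v \<noteq> 0 \<and> snd (fst v) = x2 \<and> snd (snd v) = y2}. m v)"

definition iota :: "('x1 \<times> 'x2, 'y1 \<times> 'y2) pseries \<Rightarrow> ('x1,'y1,'x2,'y2) tpseries" where
  "iota F = (\<lambda>(m1, m2). \<Sum>m\<in>{m. finite {v. m v \<noteq> 0} \<and> proj1 m = m1 \<and> proj2 m = m2}. F m)"

text \<open>mu(alpha) for alpha : [k] -> [n] surjective (0-indexed); n is the size of the image.\<close>

definition mu :: "nat \<Rightarrow> (nat \<Rightarrow> nat) \<Rightarrow> nat mat" where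
  "mu k \<alpha> = mat (card (\<alpha> ` {..<k})) k (\<lambda>(i,j). if i = \<alpha> j then 1 else 0)"

text \<open>Adm(k): pairs of surjections [k] ->> [k'], [k] ->> [k''] (normalised to 0 outside [k]),
the first weakly increasing, the second strictly increasing on each fibre of the first.\<close>

definition Adm :: "nat \<Rightarrow> ((nat \<Rightarrow> nat) \<times> (nat \<Rightarrow> nat)) set" where
  "Adm k = {(s1, s2).
      (\<exists>k1. s1 ` {..<k} = {..<k1}) \<and> (\<exists>k2. s2 ` {..<k} = {..<k2}) \<and>
      (\<forall>i\<ge>k. s1 i = 0 \<and> s2 i = 0) \<and>
      (\<forall>i j. i < j \<and> j < k \<longrightarrow> s1 i \<le> s1 j) \<and>
      (\<forall>i j. i < j \<and> j < k \<and> s1 i = s1 j \<longrightarrow> s2 i < s2 j)}"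

end

theory Submission
  imports Defs
begin

text \<open>
  A strictly increasing sequence \<open>(x\<^sub>1, y\<^sub>1) < \<dots> < (x\<^sub>k, y\<^sub>k)\<close> in the lexicographic
  product \<open>X\<^sub>1 X\<^sub>2\<close> is the same thing as an admissible pair \<open>(\<sigma>', \<sigma>'')\<close> together with
  increasing sequences \<open>a\<close> in \<open>X\<^sub>1\<close> and \<open>b\<close> in \<open>X\<^sub>2\<close>: put \<open>x\<^sub>r = a\<^bsub>\<sigma>'(r)\<^esub>\<close> and
  \<open>y\<^sub>r = b\<^bsub>\<sigma>''(r)\<^esub>\<close>, where \<open>\<sigma>'\<close> ranks the first and \<open>\<sigma>''\<close> the second coordinates.
  Under \<open>\<iota>\<close> the monomial of \<open>M\<close> at such merged row and column sequences splits into the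
  monomials of the contracted matrices \<open>\<mu>(\<sigma>')M\<mu>(\<tau>')\<^sup>T\<close> and \<open>\<mu>(\<sigma>'')M\<mu>(\<tau>'')\<^sup>T\<close>.
  Hence, coefficient by coefficient, both sides count the same set of pairs of sequences;
  packedness of \<open>M\<close> makes all these sets finite.
\<close>

section \<open>Monomials along index maps and their pushforwards\<close>

definition mat_monom :: "nat mat \<Rightarrow> (nat \<Rightarrow> 'x) \<Rightarrow> (nat \<Rightarrow> 'y) \<Rightarrow> ('x \<times> 'y \<Rightarrow> nat)" where
  "mat_monom M f g = (\<lambda>v. \<Sum>r<dim_row M. \<Sum>s<dim_col M. if (f r, g s) = v then M $$ (r,s) else 0)"

lemma monom_of_eq_mat_monom: "monom_of M is js = mat_monom M (nth is) (nth js)"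
  unfolding monom_of_def mat_monom_def by (auto simp: fun_eq_iff)

lemma mat_monom_cong:
  "(\<And>r. r < dim_row M \<Longrightarrow> f r = f' r) \<Longrightarrow> (\<And>s. s < dim_col M \<Longrightarrow> g s = g' s)
   \<Longrightarrow> mat_monom M f g = mat_monom M f' g'"
  unfolding mat_monom_def by (intro ext sum.cong) auto

lemma mat_monom_support:
  "{v. mat_monom M f g v \<noteq> 0} \<subseteq> (\<lambda>(r,s). (f r, g s)) ` ({..<dim_row M} \<times> {..<dim_col M})"
  unfolding mat_monom_def
  by (force elim!: sum.not_neutral_contains_not_neutral split: if_splits)

lemma finite_mat_monom_support: "finite {v. mat_monom M f g v \<noteq> 0}"
  by (rule finite_subset[OF mat_monom_support]) auto

lemma index_le_mat_monom:
  assumes "r < dim_row M" "s < dim_col M"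
  shows "M $$ (r,s) \<le> mat_monom M f g (f r, g s)"
proof -
  have "M $$ (r,s) \<le> (\<Sum>s'<dim_col M. if (f r, g s') = (f r, g s) then M $$ (r,s') else 0)"
    using assms(2) by (intro order.trans[OF _ member_le_sum[of s]]) auto
  also have "\<dots> \<le> mat_monom M f g (f r, g s)"
    unfolding mat_monom_def by (rule member_le_sum) (use assms in auto)
  finally show ?thesis .
qed

definition pushforward :: "('a \<Rightarrow> 'b) \<Rightarrow> ('a \<Rightarrow> nat) \<Rightarrow> 'b \<Rightarrow> nat" where
  "pushforward \<pi> m w = (\<Sum>v\<in>{v. m v \<noteq> 0 \<and> \<pi> v = w}. m v)"

lemma proj1_eq_pushforward: "proj1 = pushforward (map_prod fst fst)"
  unfolding proj1_def pushforward_def by (auto simp: fun_eq_iff intro!: sum.cong)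

lemma proj2_eq_pushforward: "proj2 = pushforward (map_prod snd snd)"
  unfolding proj2_def pushforward_def by (auto simp: fun_eq_iff intro!: sum.cong)

lemma pushforward_eq_sum:
  assumes "finite S" "{v. m v \<noteq> 0} \<subseteq> S"
  shows "pushforward \<pi> m w = (\<Sum>v\<in>{v\<in>S. \<pi> v = w}. m v)"
  unfolding pushforward_def by (rule sum.mono_neutral_left) (use assms in auto)

lemma le_pushforward:
  assumes "finite {v. m v \<noteq> 0}"
  shows "m v \<le> pushforward \<pi> m (\<pi> v)"
  unfolding pushforward_def by (cases "m v = 0") (auto intro!: member_le_sum finite_subset[OF _ assms])

lemma pushforward_support: "{w. pushforward \<pi> m w \<noteq> 0} \<subseteq> \<pi> ` {v. m v \<noteq> 0}"
  unfolding pushforward_def by (force elim!: sum.not_neutral_contains_not_neutral)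

lemma pushforward_mat_monom:
  "pushforward (map_prod p q) (mat_monom M f g) = mat_monom M (p \<circ> f) (q \<circ> g)"
proof
  fix w
  let ?R = "{..<dim_row M}" and ?S = "{..<dim_col M}"
  let ?W = "(\<lambda>(r,s). (f r, g s)) ` (?R \<times> ?S)"
  have "pushforward (map_prod p q) (mat_monom M f g) w
      = (\<Sum>v\<in>{v\<in>?W. map_prod p q v = w}. \<Sum>r\<in>?R. \<Sum>s\<in>?S. if (f r, g s) = v then M $$ (r,s) else 0)"
    by (subst pushforward_eq_sum[OF _ mat_monom_support]) (simp_all add: mat_monom_def)
  also have "\<dots> = (\<Sum>r\<in>?R. \<Sum>s\<in>?S. \<Sum>v\<in>{v\<in>?W. map_prod p q v = w}. if (f r, g s) = v then M $$ (r,s) else 0)"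
    by (subst sum.swap, subst (2) sum.swap) (rule refl)
  also have "\<dots> = (\<Sum>r\<in>?R. \<Sum>s\<in>?S. if ((p \<circ> f) r, (q \<circ> g) s) = w then M $$ (r,s) else 0)"
    by (intro sum.cong refl) auto
  finally show "pushforward (map_prod p q) (mat_monom M f g) w = mat_monom M (p \<circ> f) (q \<circ> g) w"
    unfolding mat_monom_def .
qed

section \<open>Contraction of a matrix along surjections\<close>

lemma dim_row_mu [simp]: "dim_row (mu k \<sigma>) = card (\<sigma> ` {..<k})"
  and dim_col_mu [simp]: "dim_col (mu k \<sigma>) = k"
  unfolding mu_def by simp_all

lemma index_mu [simp]:
  "i < card (\<sigma> ` {..<k}) \<Longrightarrow> j < k \<Longrightarrow> mu k \<sigma> $$ (i,j) = (if i = \<sigma> j then 1 else 0)"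
  unfolding mu_def by simp

definition contract :: "nat mat \<Rightarrow> (nat \<Rightarrow> nat) \<Rightarrow> (nat \<Rightarrow> nat) \<Rightarrow> nat mat" where
  "contract M \<sigma> \<tau> = mu (dim_row M) \<sigma> * M * transpose_mat (mu (dim_col M) \<tau>)"

lemma dim_contract [simp]:
  "dim_row (contract M \<sigma> \<tau>) = card (\<sigma> ` {..<dim_row M})"
  "dim_col (contract M \<sigma> \<tau>) = card (\<tau> ` {..<dim_col M})"
  unfolding contract_def by simp_all

lemma index_contract:
  assumes "a < card (\<sigma> ` {..<dim_row M})" "c < card (\<tau> ` {..<dim_col M})"
  shows "contract M \<sigma> \<tau> $$ (a,c) =
     (\<Sum>r<dim_row M. \<Sum>s<dim_col M. if \<sigma> r = a \<and> \<tau> s = c then M $$ (r,s) else 0)"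
proof -
  let ?k = "dim_row M" and ?l = "dim_col M"
  have row: "(mu ?k \<sigma> * M) $$ (a,s) = (\<Sum>r<?k. if \<sigma> r = a then M $$ (r,s) else 0)" if "s < ?l" for s
    using assms that by (simp add: scalar_prod_def atLeast0LessThan) (intro sum.cong, auto)
  have "contract M \<sigma> \<tau> $$ (a,c) = (\<Sum>s<?l. (mu ?k \<sigma> * M) $$ (a,s) * (if c = \<tau> s then 1 else 0))"
    using assms by (simp add: contract_def scalar_prod_def atLeast0LessThan)
  also have "\<dots> = (\<Sum>s<?l. \<Sum>r<?k. if \<sigma> r = a \<and> \<tau> s = c then M $$ (r,s) else 0)"
    using row by (intro sum.cong) (auto simp: sum_distrib_right intro!: sum.cong)
  finally show ?thesis by (simp only: sum.swap[of _ "{..<?l}"])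
qed

lemma sum_swap_nested:
  "(\<Sum>a\<in>A. \<Sum>c\<in>C. \<Sum>r\<in>R. \<Sum>s\<in>S. h a c r s) = (\<Sum>r\<in>R. \<Sum>s\<in>S. \<Sum>a\<in>A. \<Sum>c\<in>C. h a c r s)"
  by (simp only: sum.swap[of _ R]) (simp only: sum.swap[of _ S])

lemma mat_monom_contract:
  assumes "\<sigma> ` {..<dim_row M} = {..<k'}" and "\<tau> ` {..<dim_col M} = {..<l'}"
  shows "mat_monom (contract M \<sigma> \<tau>) f g = mat_monom M (f \<circ> \<sigma>) (g \<circ> \<tau>)"
proof
  fix v
  let ?R = "{..<dim_row M}" and ?S = "{..<dim_col M}"
  let ?h = "\<lambda>a c r s. if c = \<tau> s then if a = \<sigma> r then if (f a, g c) = v then M $$ (r,s) else 0 else 0 else 0"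
  have card_images: "card (\<sigma> ` ?R) = k'" "card (\<tau> ` ?S) = l'"
    using assms by simp_all
  have "mat_monom (contract M \<sigma> \<tau>) f g v = (\<Sum>a<k'. \<Sum>c<l'. \<Sum>r\<in>?R. \<Sum>s\<in>?S. ?h a c r s)"
    unfolding mat_monom_def using index_contract[of _ \<sigma> M _ \<tau>]
    by (simp add: card_images) (intro sum.cong, auto simp: card_images intro!: sum.cong)
  also have "\<dots> = (\<Sum>r\<in>?R. \<Sum>s\<in>?S. \<Sum>a<k'. \<Sum>c<l'. ?h a c r s)"
    by (rule sum_swap_nested)
  also have "\<dots> = (\<Sum>r\<in>?R. \<Sum>s\<in>?S. if (f (\<sigma> r), g (\<tau> s)) = v then M $$ (r,s) else 0)"
    using imageI[of _ ?R \<sigma>] imageI[of _ ?S \<tau>] assms by (intro sum.cong refl) simp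
  finally show "mat_monom (contract M \<sigma> \<tau>) f g v = mat_monom M (f \<circ> \<sigma>) (g \<circ> \<tau>) v"
    unfolding mat_monom_def by simp
qed

section \<open>Merging increasing sequences along admissible pairs\<close>

definition incr_seqs :: "'a::linorder set \<Rightarrow> nat \<Rightarrow> 'a list set" where
  "incr_seqs X n = {xs. length xs = n \<and> sorted_wrt (<) xs \<and> set xs \<subseteq> X}"

lemma strict_sorted_nth_less_iff:
  fixes xs :: "'a::linorder list"
  assumes "sorted_wrt (<) xs" "i < length xs" "j < length xs"
  shows "xs ! i < xs ! j \<longleftrightarrow> i < j"
  using assms sorted_wrt_nth_less[OF assms(1)] by (metis less_asym linorder_neqE_nat)

lemma strict_sorted_nth_le_iff:
  fixes xs :: "'a::linorder list"
  assumes "sorted_wrt (<) xs" "i < length xs" "j < length xs"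
  shows "xs ! i \<le> xs ! j \<longleftrightarrow> i \<le> j"
  using strict_sorted_nth_less_iff[OF assms(1,3,2)] by (meson not_less)

definition position :: "'a list \<Rightarrow> 'a \<Rightarrow> nat" where
  "position xs x = the_inv_into {..<length xs} (nth xs) x"

lemma
  assumes "distinct xs" "x \<in> set xs"
  shows position_less_length: "position xs x < length xs"
    and nth_position: "xs ! position xs x = x"
proof -
  have inj: "inj_on (nth xs) {..<length xs}" and x: "x \<in> nth xs ` {..<length xs}"
    using assms by (auto simp: inj_on_nth in_set_conv_nth)
  show "position xs x < length xs" "xs ! position xs x = x"
    unfolding position_def using the_inv_into_into[OF inj x] f_the_inv_into_f[OF inj x] by auto
qed

lemma position_nth: "distinct xs \<Longrightarrow> i < length xs \<Longrightarrow> position xs (xs ! i) = i"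
  unfolding position_def by (auto intro: the_inv_into_f_f inj_on_nth)

lemma AdmI:
  assumes "\<sigma>1 ` {..<k} = {..<k1}" "\<sigma>2 ` {..<k} = {..<k2}"
    and "\<And>i. k \<le> i \<Longrightarrow> \<sigma>1 i = 0 \<and> \<sigma>2 i = 0"
    and "\<And>i j. i < j \<Longrightarrow> j < k \<Longrightarrow> \<sigma>1 i \<le> \<sigma>1 j"
    and "\<And>i j. i < j \<Longrightarrow> j < k \<Longrightarrow> \<sigma>1 i = \<sigma>1 j \<Longrightarrow> \<sigma>2 i < \<sigma>2 j"
  shows "(\<sigma>1, \<sigma>2) \<in> Adm k"
  unfolding Adm_def using assms by simp

lemma
  assumes "(\<sigma>1, \<sigma>2) \<in> Adm k"
  shows Adm_image: "\<sigma>1 ` {..<k} = {..<card (\<sigma>1 ` {..<k})}" "\<sigma>2 ` {..<k} = {..<card (\<sigma>2 ` {..<k})}"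
    and Adm_zero: "k \<le> i \<Longrightarrow> \<sigma>1 i = 0 \<and> \<sigma>2 i = 0"
    and Adm_mono: "i < j \<Longrightarrow> j < k \<Longrightarrow> \<sigma>1 i \<le> \<sigma>1 j"
    and Adm_fibre_strict: "i < j \<Longrightarrow> j < k \<Longrightarrow> \<sigma>1 i = \<sigma>1 j \<Longrightarrow> \<sigma>2 i < \<sigma>2 j"
proof -
  have "\<exists>k1. \<sigma>1 ` {..<k} = {..<k1}" "\<exists>k2. \<sigma>2 ` {..<k} = {..<k2}"
    using assms unfolding Adm_def by simp_all
  then obtain k1 k2 where k1: "\<sigma>1 ` {..<k} = {..<k1}" and k2: "\<sigma>2 ` {..<k} = {..<k2}"
    by blast
  show "\<sigma>1 ` {..<k} = {..<card (\<sigma>1 ` {..<k})}"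
    unfolding k1 card_lessThan ..
  show "\<sigma>2 ` {..<k} = {..<card (\<sigma>2 ` {..<k})}"
    unfolding k2 card_lessThan ..
  show "k \<le> i \<Longrightarrow> \<sigma>1 i = 0 \<and> \<sigma>2 i = 0"
    and "i < j \<Longrightarrow> j < k \<Longrightarrow> \<sigma>1 i \<le> \<sigma>1 j"
    and "i < j \<Longrightarrow> j < k \<Longrightarrow> \<sigma>1 i = \<sigma>1 j \<Longrightarrow> \<sigma>2 i < \<sigma>2 j"
    using assms unfolding Adm_def by simp_all
qed

lemma finite_Adm: "finite (Adm k)"
proof -
  let ?F = "{f::nat \<Rightarrow> nat. \<forall>x. (x \<in> {..<k} \<longrightarrow> f x \<in> {..<k}) \<and> (x \<notin> {..<k} \<longrightarrow> f x = 0)}"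
  have "Adm k \<subseteq> ?F \<times> ?F"
  proof
    fix p assume p: "p \<in> Adm k"
    obtain \<sigma>1 \<sigma>2 where p_eq: "p = (\<sigma>1, \<sigma>2)" by (cases p)
    have A: "(\<sigma>1, \<sigma>2) \<in> Adm k" using p unfolding p_eq .
    have "\<sigma>1 r < k" "\<sigma>2 r < k" if "r < k" for r
    proof -
      have "\<sigma>1 r \<in> \<sigma>1 ` {..<k}" "\<sigma>2 r \<in> \<sigma>2 ` {..<k}" using that by simp_all
      then have "\<sigma>1 r < card (\<sigma>1 ` {..<k})" "\<sigma>2 r < card (\<sigma>2 ` {..<k})"
        using Adm_image[OF A] by blast+
      then show "\<sigma>1 r < k" "\<sigma>2 r < k"
        using card_image_le[of "{..<k}" \<sigma>1] card_image_le[of "{..<k}" \<sigma>2] by simp_all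
    qed
    then show "p \<in> ?F \<times> ?F" using Adm_zero[OF A] unfolding p_eq by (simp add: not_less)
  qed
  moreover have "finite (?F \<times> ?F)" by (intro finite_cartesian_product finite_set_of_finite_funs) simp_all
  ultimately show ?thesis by (rule finite_subset)
qed

definition merge_seq :: "nat \<Rightarrow> (nat \<Rightarrow> nat) \<Rightarrow> (nat \<Rightarrow> nat) \<Rightarrow> 'a list \<Rightarrow> 'b list \<Rightarrow> ('a \<times> 'b) list" where
  "merge_seq k \<sigma>1 \<sigma>2 as bs = map (\<lambda>r. (as ! \<sigma>1 r, bs ! \<sigma>2 r)) [0..<k]"

definition merge_data :: "'a::linorder set \<Rightarrow> 'b::linorder set \<Rightarrow> nat
    \<Rightarrow> ((nat \<Rightarrow> nat) \<times> (nat \<Rightarrow> nat) \<times> 'a list \<times> 'b list) set" where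
  "merge_data X1 X2 k = {(\<sigma>1, \<sigma>2, as, bs). (\<sigma>1, \<sigma>2) \<in> Adm k \<and>
     as \<in> incr_seqs X1 (card (\<sigma>1 ` {..<k})) \<and> bs \<in> incr_seqs X2 (card (\<sigma>2 ` {..<k}))}"

lemma merge_dataD:
  assumes "(\<sigma>1, \<sigma>2, as, bs) \<in> merge_data X1 X2 k"
  shows "(\<sigma>1, \<sigma>2) \<in> Adm k" "\<sigma>1 ` {..<k} = {..<length as}" "\<sigma>2 ` {..<k} = {..<length bs}"
    "sorted_wrt (<) as" "sorted_wrt (<) bs" "set as \<subseteq> X1" "set bs \<subseteq> X2"
proof -
  have la: "length as = card (\<sigma>1 ` {..<k})" and lb: "length bs = card (\<sigma>2 ` {..<k})"
    using assms unfolding merge_data_def incr_seqs_def by auto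
  show A: "(\<sigma>1, \<sigma>2) \<in> Adm k"
    and "sorted_wrt (<) as" "sorted_wrt (<) bs" "set as \<subseteq> X1" "set bs \<subseteq> X2"
    using assms unfolding merge_data_def incr_seqs_def by auto
  show "\<sigma>1 ` {..<k} = {..<length as}" "\<sigma>2 ` {..<k} = {..<length bs}"
    unfolding la lb by (fact Adm_image[OF A])+
qed

lemma
  assumes "\<sigma>1 ` {..<k} = {..<length as}" "\<sigma>2 ` {..<k} = {..<length bs}"
  shows fst_set_merge_seq: "fst ` set (merge_seq k \<sigma>1 \<sigma>2 as bs) = set as"
    and snd_set_merge_seq: "snd ` set (merge_seq k \<sigma>1 \<sigma>2 as bs) = set bs"
proof -
  have "fst ` set (merge_seq k \<sigma>1 \<sigma>2 as bs) = nth as ` \<sigma>1 ` {..<k}"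
    "snd ` set (merge_seq k \<sigma>1 \<sigma>2 as bs) = nth bs ` \<sigma>2 ` {..<k}"
    by (auto simp: merge_seq_def image_image atLeast0LessThan)
  then show "fst ` set (merge_seq k \<sigma>1 \<sigma>2 as bs) = set as"
    "snd ` set (merge_seq k \<sigma>1 \<sigma>2 as bs) = set bs"
    using assms by (auto simp: in_set_conv_nth)
qed

lemma merge_seq_in_incr_seqs:
  assumes d: "(\<sigma>1, \<sigma>2, as, bs) \<in> merge_data X1 X2 k"
  shows "merge_seq k \<sigma>1 \<sigma>2 as bs \<in> incr_seqs (X1 \<times> X2) k"
proof -
  note D = merge_dataD[OF d]
  have len: "\<sigma>1 r < length as" "\<sigma>2 r < length bs" if "r < k" for r
    using that D(2,3) by blast+
  have "as ! \<sigma>1 i < as ! \<sigma>1 j \<or> as ! \<sigma>1 i \<le> as ! \<sigma>1 j \<and> bs ! \<sigma>2 i < bs ! \<sigma>2 j"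
    if "i < j" "j < k" for i j
  proof (cases "\<sigma>1 i = \<sigma>1 j")
    case True
    then have "\<sigma>2 i < \<sigma>2 j" using Adm_fibre_strict[OF D(1) that] by blast
    then show ?thesis using True strict_sorted_nth_less_iff[OF D(5)] len that by simp
  next
    case False
    moreover have "\<sigma>1 i \<le> \<sigma>1 j" using Adm_mono[OF D(1) that] .
    ultimately have "\<sigma>1 i < \<sigma>1 j" by simp
    then show ?thesis using strict_sorted_nth_less_iff[OF D(4)] len that by simp
  qed
  then have "sorted_wrt (<) (merge_seq k \<sigma>1 \<sigma>2 as bs)"
    unfolding sorted_wrt_iff_nth_less merge_seq_def by simp
  moreover have "set (merge_seq k \<sigma>1 \<sigma>2 as bs) \<subseteq> X1 \<times> X2"
    using D(6,7) len unfolding merge_seq_def by (auto dest!: nth_mem)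
  ultimately show ?thesis unfolding incr_seqs_def merge_seq_def by simp
qed

lemma merge_seq_eq_imp_eq:
  assumes d: "(\<sigma>1, \<sigma>2, as, bs) \<in> merge_data X1 X2 k" and d': "(\<sigma>1', \<sigma>2', as', bs') \<in> merge_data X1 X2 k"
    and eq: "merge_seq k \<sigma>1 \<sigma>2 as bs = merge_seq k \<sigma>1' \<sigma>2' as' bs'"
  shows "\<sigma>1 = \<sigma>1' \<and> \<sigma>2 = \<sigma>2' \<and> as = as' \<and> bs = bs'"
proof -
  note D = merge_dataD[OF d] and D' = merge_dataD[OF d']
  have "set as' = set as" "set bs' = set bs"
    using eq fst_set_merge_seq[OF D(2,3)] snd_set_merge_seq[OF D(2,3)]
      fst_set_merge_seq[OF D'(2,3)] snd_set_merge_seq[OF D'(2,3)] by simp_all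
  then have as: "as' = as" and bs: "bs' = bs"
    using D(4,5) D'(4,5) strict_sorted_equal by metis+
  have "\<sigma>1 r = \<sigma>1' r \<and> \<sigma>2 r = \<sigma>2' r" for r
  proof (cases "r < k")
    case True
    then have "as ! \<sigma>1 r = as ! \<sigma>1' r" "bs ! \<sigma>2 r = bs ! \<sigma>2' r"
      using arg_cong[OF eq, of "\<lambda>xs. xs ! r"] as bs by (simp_all add: merge_seq_def)
    moreover have "\<sigma>1 r < length as" "\<sigma>1' r < length as" "\<sigma>2 r < length bs" "\<sigma>2' r < length bs"
      using True D(2,3) D'(2,3) as bs by blast+
    ultimately show ?thesis
      using strict_sorted_nth_le_iff[OF D(4)] strict_sorted_nth_le_iff[OF D(5)] by (metis order.eq_iff)
  next
    case False
    then show ?thesis using Adm_zero[OF D(1)] Adm_zero[OF D'(1)] by simp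
  qed
  then show ?thesis using as bs by auto
qed

lemma inj_on_merge_seq:
  "inj_on (\<lambda>(\<sigma>1, \<sigma>2, as, bs). merge_seq k \<sigma>1 \<sigma>2 as bs) (merge_data X1 X2 k)"
proof (rule inj_onI)
  fix d d' assume d: "d \<in> merge_data X1 X2 k" and d': "d' \<in> merge_data X1 X2 k"
    and eq: "(\<lambda>(\<sigma>1, \<sigma>2, as, bs). merge_seq k \<sigma>1 \<sigma>2 as bs) d = (\<lambda>(\<sigma>1, \<sigma>2, as, bs). merge_seq k \<sigma>1 \<sigma>2 as bs) d'"
  obtain \<sigma>1 \<sigma>2 as bs where d_eq: "d = (\<sigma>1, \<sigma>2, as, bs)" by (cases d rule: prod_cases4)
  obtain \<sigma>1' \<sigma>2' as' bs' where d'_eq: "d' = (\<sigma>1', \<sigma>2', as', bs')" by (cases d' rule: prod_cases4)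
  have "merge_seq k \<sigma>1 \<sigma>2 as bs = merge_seq k \<sigma>1' \<sigma>2' as' bs'"
    using eq unfolding d_eq d'_eq by simp
  then show "d = d'"
    unfolding d_eq d'_eq using merge_seq_eq_imp_eq[OF d[unfolded d_eq] d'[unfolded d'_eq]] by blast
qed

text \<open>\<open>rank_seq ys r\<close> is the index of \<open>ys ! r\<close> among the distinct entries of \<open>ys\<close>; it is
  \<open>0\<close> for \<open>r \<ge> length ys\<close>, as \<open>Adm\<close> requires.\<close>

definition rank_seq :: "'a::linorder list \<Rightarrow> nat \<Rightarrow> nat" where
  "rank_seq ys r = (if r < length ys then position (sorted_list_of_set (set ys)) (ys ! r) else 0)"

lemma
  fixes ys :: "'a::linorder list"
  assumes "r < length ys"
  shows rank_seq_less_card: "rank_seq ys r < card (set ys)"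
    and nth_rank_seq: "sorted_list_of_set (set ys) ! rank_seq ys r = ys ! r"
  using assms position_less_length[of "sorted_list_of_set (set ys)" "ys ! r"]
    nth_position[of "sorted_list_of_set (set ys)" "ys ! r"]
  by (simp_all add: rank_seq_def)

lemma rank_seq_image:
  fixes ys :: "'a::linorder list"
  shows "rank_seq ys ` {..<length ys} = {..<card (set ys)}"
proof
  show "rank_seq ys ` {..<length ys} \<subseteq> {..<card (set ys)}"
    using rank_seq_less_card by auto
  show "{..<card (set ys)} \<subseteq> rank_seq ys ` {..<length ys}"
  proof
    fix i assume i: "i \<in> {..<card (set ys)}"
    let ?zs = "sorted_list_of_set (set ys)"
    have "?zs ! i \<in> set ys" using i nth_mem[of i ?zs] by simp
    then obtain r where r: "r < length ys" "ys ! r = ?zs ! i" by (auto simp: in_set_conv_nth)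
    then have "rank_seq ys r = i" using i by (simp add: rank_seq_def position_nth)
    then show "i \<in> rank_seq ys ` {..<length ys}" using r by blast
  qed
qed

lemma
  fixes ys :: "'a::linorder list"
  assumes "i < length ys" "j < length ys"
  shows rank_seq_le_iff: "rank_seq ys i \<le> rank_seq ys j \<longleftrightarrow> ys ! i \<le> ys ! j"
    and rank_seq_less_iff: "rank_seq ys i < rank_seq ys j \<longleftrightarrow> ys ! i < ys ! j"
  using assms strict_sorted_nth_le_iff[of "sorted_list_of_set (set ys)" "rank_seq ys i" "rank_seq ys j"]
    strict_sorted_nth_less_iff[of "sorted_list_of_set (set ys)" "rank_seq ys i" "rank_seq ys j"]
  by (simp_all add: rank_seq_less_card nth_rank_seq)

lemma merge_seq_surj:
  assumes xs: "xs \<in> incr_seqs (X1 \<times> X2) k"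
  shows "xs \<in> (\<lambda>(\<sigma>1, \<sigma>2, as, bs). merge_seq k \<sigma>1 \<sigma>2 as bs) ` merge_data X1 X2 k"
proof -
  have len: "length xs = k" and sorted: "sorted_wrt (<) xs" and set: "set xs \<subseteq> X1 \<times> X2"
    using xs unfolding incr_seqs_def by auto
  let ?ys = "map fst xs" and ?zs = "map snd xs"
  let ?\<sigma>1 = "rank_seq ?ys" and ?\<sigma>2 = "rank_seq ?zs"
  let ?as = "sorted_list_of_set (set ?ys)" and ?bs = "sorted_list_of_set (set ?zs)"
  have lens: "length ?ys = k" "length ?zs = k" using len by simp_all
  have fst_le: "fst (xs ! i) \<le> fst (xs ! j)"
    and snd_less: "fst (xs ! i) = fst (xs ! j) \<Longrightarrow> snd (xs ! i) < snd (xs ! j)" if "i < j" "j < k" for i j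
    using sorted_wrt_nth_less[OF sorted that(1)] that len unfolding less_prod_def' by auto
  have "(?\<sigma>1, ?\<sigma>2) \<in> Adm k"
  proof (rule AdmI)
    show "?\<sigma>1 ` {..<k} = {..<card (set ?ys)}" "?\<sigma>2 ` {..<k} = {..<card (set ?zs)}"
      using rank_seq_image[of ?ys] rank_seq_image[of ?zs] len by simp_all
    show "?\<sigma>1 i = 0 \<and> ?\<sigma>2 i = 0" if "k \<le> i" for i
      using that lens by (simp add: rank_seq_def)
    show "?\<sigma>1 i \<le> ?\<sigma>1 j" if "i < j" "j < k" for i j
      using rank_seq_le_iff[of i ?ys j] fst_le[OF that] that lens by simp
    show "?\<sigma>2 i < ?\<sigma>2 j" if "i < j" "j < k" "?\<sigma>1 i = ?\<sigma>1 j" for i j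
    proof -
      have "fst (xs ! i) \<le> fst (xs ! j)" "fst (xs ! j) \<le> fst (xs ! i)"
        using rank_seq_le_iff[of i ?ys j] rank_seq_le_iff[of j ?ys i] that lens by simp_all
      then have "snd (xs ! i) < snd (xs ! j)" using snd_less[OF that(1,2)] by simp
      then show ?thesis using rank_seq_less_iff[of i ?zs j] that lens by simp
    qed
  qed
  moreover have "?as \<in> incr_seqs X1 (card (?\<sigma>1 ` {..<k}))" "?bs \<in> incr_seqs X2 (card (?\<sigma>2 ` {..<k}))"
    using rank_seq_image[of ?ys] rank_seq_image[of ?zs] len set unfolding incr_seqs_def by auto
  ultimately have data: "(?\<sigma>1, ?\<sigma>2, ?as, ?bs) \<in> merge_data X1 X2 k"
    unfolding merge_data_def by simp
  have merge: "merge_seq k ?\<sigma>1 ?\<sigma>2 ?as ?bs = xs"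
  proof (rule nth_equalityI)
    show "length (merge_seq k ?\<sigma>1 ?\<sigma>2 ?as ?bs) = length xs" using len by (simp add: merge_seq_def)
    show "merge_seq k ?\<sigma>1 ?\<sigma>2 ?as ?bs ! r = xs ! r" if "r < length (merge_seq k ?\<sigma>1 ?\<sigma>2 ?as ?bs)" for r
      using that nth_rank_seq[of r ?ys] nth_rank_seq[of r ?zs] len by (simp add: merge_seq_def)
  qed
  show ?thesis
    using merge by (intro rev_image_eqI[OF data]) simp
qed

lemma bij_betw_merge_seq:
  "bij_betw (\<lambda>(\<sigma>1, \<sigma>2, as, bs). merge_seq k \<sigma>1 \<sigma>2 as bs) (merge_data X1 X2 k) (incr_seqs (X1 \<times> X2) k)"
  unfolding bij_betw_def
proof (intro conjI inj_on_merge_seq subset_antisym)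
  show "(\<lambda>(\<sigma>1, \<sigma>2, as, bs). merge_seq k \<sigma>1 \<sigma>2 as bs) ` merge_data X1 X2 k \<subseteq> incr_seqs (X1 \<times> X2) k"
    by (rule image_subsetI) (clarify, rule merge_seq_in_incr_seqs)
  show "incr_seqs (X1 \<times> X2) k \<subseteq> (\<lambda>(\<sigma>1, \<sigma>2, as, bs). merge_seq k \<sigma>1 \<sigma>2 as bs) ` merge_data X1 X2 k"
    using merge_seq_surj by (rule subsetI)
qed

section \<open>Coefficients as cardinalities\<close>

definition Phi_fibre :: "nat mat \<Rightarrow> 'x::linorder set \<Rightarrow> 'y::linorder set \<Rightarrow> ('x \<times> 'y \<Rightarrow> nat)
    \<Rightarrow> ('x list \<times> 'y list) set" where
  "Phi_fibre M X Y m = {(is, js). is \<in> incr_seqs X (dim_row M) \<and> js \<in> incr_seqs Y (dim_col M)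
     \<and> monom_of M is js = m}"

lemma Phi_eq_card_Phi_fibre: "Phi M X Y m = of_nat (card (Phi_fibre M X Y m))"
  unfolding Phi_def Phi_fibre_def incr_seqs_def by (rule arg_cong[where f = "\<lambda>S. of_nat (card S)"]) auto

lemma
  assumes "packed M" "length is = dim_row M" "length js = dim_col M"
  shows set_subset_fst_mat_monom_support: "set is \<subseteq> fst ` {v. mat_monom M (nth is) (nth js) v \<noteq> 0}"
    and set_subset_snd_mat_monom_support: "set js \<subseteq> snd ` {v. mat_monom M (nth is) (nth js) v \<noteq> 0}"
proof -
  have supp: "(is ! r, js ! s) \<in> {v. mat_monom M (nth is) (nth js) v \<noteq> 0}"
    if "r < dim_row M" "s < dim_col M" "M $$ (r,s) \<noteq> 0" for r s
    using index_le_mat_monom[OF that(1,2), of "nth is" "nth js"] that(3) by simp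
  show "set is \<subseteq> fst ` {v. mat_monom M (nth is) (nth js) v \<noteq> 0}"
  proof
    fix x assume "x \<in> set is"
    then obtain r where r: "r < dim_row M" "x = is ! r" using assms(2) by (auto simp: in_set_conv_nth)
    then obtain s where "s < dim_col M" "M $$ (r,s) \<noteq> 0" using assms(1) unfolding packed_def by blast
    then show "x \<in> fst ` {v. mat_monom M (nth is) (nth js) v \<noteq> 0}" using supp[OF r(1)] r(2) by force
  qed
  show "set js \<subseteq> snd ` {v. mat_monom M (nth is) (nth js) v \<noteq> 0}"
  proof
    fix y assume "y \<in> set js"
    then obtain s where s: "s < dim_col M" "y = js ! s" using assms(3) by (auto simp: in_set_conv_nth)
    then obtain r where "r < dim_row M" "M $$ (r,s) \<noteq> 0" using assms(1) unfolding packed_def by blast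
    then show "y \<in> snd ` {v. mat_monom M (nth is) (nth js) v \<noteq> 0}" using supp[OF _ s(1)] s(2) by force
  qed
qed

lemma finite_Phi_fibre:
  assumes "packed M"
  shows "finite (Phi_fibre M X Y m)"
proof (cases "finite {v. m v \<noteq> 0}")
  case False
  then have "Phi_fibre M X Y m = {}"
    unfolding Phi_fibre_def monom_of_eq_mat_monom using finite_mat_monom_support by blast
  then show ?thesis by simp
next
  case True
  let ?S = "{v. m v \<noteq> 0}"
  have "Phi_fibre M X Y m \<subseteq> {is. set is \<subseteq> fst ` ?S \<and> length is = dim_row M} \<times>
      {js. set js \<subseteq> snd ` ?S \<and> length js = dim_col M}"
  proof
    fix p assume "p \<in> Phi_fibre M X Y m"
    then obtain "is" js where p: "p = (is, js)" and len: "length is = dim_row M" "length js = dim_col M"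
      and m: "m = mat_monom M (nth is) (nth js)"
      unfolding Phi_fibre_def incr_seqs_def monom_of_eq_mat_monom by auto
    show "p \<in> {is. set is \<subseteq> fst ` ?S \<and> length is = dim_row M} \<times>
      {js. set js \<subseteq> snd ` ?S \<and> length js = dim_col M}"
      using set_subset_fst_mat_monom_support[OF assms len] set_subset_snd_mat_monom_support[OF assms len]
      unfolding p m using len by simp
  qed
  moreover have "finite (fst ` ?S)" "finite (snd ` ?S)" using True by simp_all
  ultimately show ?thesis
    by (rule finite_subset[OF _ finite_cartesian_product[OF finite_lists_length_eq finite_lists_length_eq]])
qed

lemma finite_pushforward_preimage:
  assumes "inj (\<lambda>v. (\<pi>1 v, \<pi>2 v))"
  shows "finite {m. finite {v. m v \<noteq> 0} \<and> pushforward \<pi>1 m = m1 \<and> pushforward \<pi>2 m = m2}"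
    (is "finite ?A")
proof (cases "?A = {}")
  case True
  then show ?thesis by (simp only: finite.emptyI)
next
  case False
  then obtain m0 where m0: "m0 \<in> ?A" by blast
  let ?S1 = "{w. m1 w \<noteq> 0}" and ?S2 = "{w. m2 w \<noteq> 0}"
  have "?S1 \<subseteq> \<pi>1 ` {v. m0 v \<noteq> 0}" "?S2 \<subseteq> \<pi>2 ` {v. m0 v \<noteq> 0}"
    using m0 pushforward_support[of \<pi>1 m0] pushforward_support[of \<pi>2 m0] by auto
  then have fin: "finite ?S1" "finite ?S2"
    using m0 by (auto intro: finite_subset)
  let ?T = "(\<lambda>v. (\<pi>1 v, \<pi>2 v)) -` (?S1 \<times> ?S2)"
  let ?B = "\<Sum>w\<in>?S1. m1 w"
  have "?A \<subseteq> {m. \<forall>v. (v \<in> ?T \<longrightarrow> m v \<in> {..?B}) \<and> (v \<notin> ?T \<longrightarrow> m v = 0)}"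
  proof (intro subsetI CollectI allI)
    fix m v assume "m \<in> ?A"
    then have le: "m v \<le> m1 (\<pi>1 v)" "m v \<le> m2 (\<pi>2 v)"
      using le_pushforward[of m v] by auto
    moreover have "m1 (\<pi>1 v) \<le> ?B" if "\<pi>1 v \<in> ?S1"
      using that fin(1) by (intro member_le_sum) auto
    ultimately show "(v \<in> ?T \<longrightarrow> m v \<in> {..?B}) \<and> (v \<notin> ?T \<longrightarrow> m v = 0)"
      by (auto intro: order.trans)
  qed
  moreover have "finite ?T"
    using fin assms by (intro finite_vimageI) auto
  ultimately show ?thesis
    by (rule finite_subset[OF _ finite_set_of_finite_funs]) simp
qed

lemma finite_proj_preimage:
  "finite {m. finite {v. m v \<noteq> 0} \<and> proj1 m = m1 \<and> proj2 m = m2}"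
  unfolding proj1_eq_pushforward proj2_eq_pushforward
  by (rule finite_pushforward_preimage) (auto intro: injI)

definition proj_fibre :: "nat mat \<Rightarrow> 'x1::linorder set \<Rightarrow> 'x2::linorder set \<Rightarrow> 'y1::linorder set
    \<Rightarrow> 'y2::linorder set \<Rightarrow> ('x1 \<times> 'y1 \<Rightarrow> nat) \<Rightarrow> ('x2 \<times> 'y2 \<Rightarrow> nat)
    \<Rightarrow> (('x1 \<times> 'x2) list \<times> ('y1 \<times> 'y2) list) set" where
  "proj_fibre M X1 X2 Y1 Y2 m1 m2 = {(is, js).
     is \<in> incr_seqs (X1 \<times> X2) (dim_row M) \<and> js \<in> incr_seqs (Y1 \<times> Y2) (dim_col M) \<and>
     proj1 (monom_of M is js) = m1 \<and> proj2 (monom_of M is js) = m2}"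

lemma proj_fibre_eq_UN_Phi_fibre:
  "proj_fibre M X1 X2 Y1 Y2 m1 m2 =
     (\<Union>m\<in>{m. finite {v. m v \<noteq> 0} \<and> proj1 m = m1 \<and> proj2 m = m2}. Phi_fibre M (X1 \<times> X2) (Y1 \<times> Y2) m)"
  unfolding proj_fibre_def Phi_fibre_def monom_of_eq_mat_monom
  using finite_mat_monom_support by blast

lemma iota_Phi_eq_card_proj_fibre:
  assumes "packed M"
  shows "iota (Phi M (X1 \<times> X2) (Y1 \<times> Y2)) (m1, m2) = of_nat (card (proj_fibre M X1 X2 Y1 Y2 m1 m2))"
proof -
  let ?A = "{m. finite {v. m v \<noteq> 0} \<and> proj1 m = m1 \<and> proj2 m = m2}"
  let ?F = "Phi_fibre M (X1 \<times> X2) (Y1 \<times> Y2)"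
  have "iota (Phi M (X1 \<times> X2) (Y1 \<times> Y2)) (m1, m2) = of_nat (\<Sum>m\<in>?A. card (?F m))"
    unfolding iota_def Phi_eq_card_Phi_fibre by simp
  also have "(\<Sum>m\<in>?A. card (?F m)) = card (\<Union>m\<in>?A. ?F m)"
    using finite_proj_preimage finite_Phi_fibre[OF assms]
    by (intro card_UN_disjoint[symmetric]) (auto simp: Phi_fibre_def)
  finally show ?thesis unfolding proj_fibre_eq_UN_Phi_fibre .
qed

lemma finite_proj_fibre: "packed M \<Longrightarrow> finite (proj_fibre M X1 X2 Y1 Y2 m1 m2)"
  unfolding proj_fibre_eq_UN_Phi_fibre by (intro finite_UN_I finite_proj_preimage finite_Phi_fibre)

lemma
  assumes d: "(\<sigma>1, \<sigma>2, as, bs) \<in> merge_data X1 X2 (dim_row M)"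
    and e: "(\<tau>1, \<tau>2, cs, ds) \<in> merge_data Y1 Y2 (dim_col M)"
  shows proj1_monom_of_merge_seq:
      "proj1 (monom_of M (merge_seq (dim_row M) \<sigma>1 \<sigma>2 as bs) (merge_seq (dim_col M) \<tau>1 \<tau>2 cs ds))
       = monom_of (contract M \<sigma>1 \<tau>1) as cs"
    and proj2_monom_of_merge_seq:
      "proj2 (monom_of M (merge_seq (dim_row M) \<sigma>1 \<sigma>2 as bs) (merge_seq (dim_col M) \<tau>1 \<tau>2 cs ds))
       = monom_of (contract M \<sigma>2 \<tau>2) bs ds"
  unfolding monom_of_eq_mat_monom proj1_eq_pushforward proj2_eq_pushforward pushforward_mat_monom
    mat_monom_contract[OF merge_dataD(2)[OF d] merge_dataD(2)[OF e]]
    mat_monom_contract[OF merge_dataD(3)[OF d] merge_dataD(3)[OF e]]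
  by (rule mat_monom_cong; simp add: merge_seq_def)+

definition merge_pair :: "nat \<Rightarrow> nat \<Rightarrow> ((nat \<Rightarrow> nat) \<times> (nat \<Rightarrow> nat) \<times> 'a list \<times> 'b list) \<times>
    ((nat \<Rightarrow> nat) \<times> (nat \<Rightarrow> nat) \<times> 'c list \<times> 'd list) \<Rightarrow> ('a \<times> 'b) list \<times> ('c \<times> 'd) list" where
  "merge_pair k l = map_prod (\<lambda>(\<sigma>1, \<sigma>2, as, bs). merge_seq k \<sigma>1 \<sigma>2 as bs)
     (\<lambda>(\<tau>1, \<tau>2, cs, ds). merge_seq l \<tau>1 \<tau>2 cs ds)"

lemma bij_betw_merge_pair_proj_fibre:
  "bij_betw (merge_pair (dim_row M) (dim_col M))
    ((merge_data X1 X2 (dim_row M) \<times> merge_data Y1 Y2 (dim_col M))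
      \<inter> merge_pair (dim_row M) (dim_col M) -` proj_fibre M X1 X2 Y1 Y2 m1 m2)
    (proj_fibre M X1 X2 Y1 Y2 m1 m2)"
    (is "bij_betw _ (?D \<inter> _) _")
proof -
  let ?f = "merge_pair (dim_row M) (dim_col M)" and ?P = "proj_fibre M X1 X2 Y1 Y2 m1 m2"
  have bij: "bij_betw ?f ?D (incr_seqs (X1 \<times> X2) (dim_row M) \<times> incr_seqs (Y1 \<times> Y2) (dim_col M))"
    unfolding merge_pair_def by (intro bij_betw_map_prod bij_betw_merge_seq)
  have P_sub: "?P \<subseteq> incr_seqs (X1 \<times> X2) (dim_row M) \<times> incr_seqs (Y1 \<times> Y2) (dim_col M)"
    unfolding proj_fibre_def by auto
  have "?P \<subseteq> ?f ` (?D \<inter> ?f -` ?P)"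
  proof
    fix y assume y: "y \<in> ?P"
    then obtain x where "x \<in> ?D" "y = ?f x"
      using P_sub bij_betw_imp_surj_on[OF bij] by blast
    then show "y \<in> ?f ` (?D \<inter> ?f -` ?P)" using y by blast
  qed
  then have "?f ` (?D \<inter> ?f -` ?P) = ?P" by blast
  then show ?thesis by (rule bij_betw_subset[OF bij Int_lower1])
qed

definition regroup :: "(('a \<times> 'b) \<times> ('c \<times> 'd)) \<times> ('e \<times> 'f) \<times> ('g \<times> 'h)
    \<Rightarrow> ('a \<times> 'b \<times> 'e \<times> 'g) \<times> ('c \<times> 'd \<times> 'f \<times> 'h)" where
  "regroup = (\<lambda>(((a, b), (c, d)), ((e, f), (g, h))). ((a, b, e, g), (c, d, f, h)))"

lemma bij_regroup: "bij regroup"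
proof (rule bijI)
  show "inj regroup"
    unfolding regroup_def by (rule injI) (auto simp: split_beta prod_eq_iff)
  show "surj regroup"
    by (rule surjI[where f = "\<lambda>((a, b, e, g), (c, d, f, h)). (((a, b), (c, d)), ((e, f), (g, h)))"])
      (simp add: regroup_def split_beta)
qed

lemma Sigma_Phi_fibre_eq_vimage_regroup:
  fixes X1 :: "'x1::linorder set" and X2 :: "'x2::linorder set"
    and Y1 :: "'y1::linorder set" and Y2 :: "'y2::linorder set"
  shows "Sigma (Adm (dim_row M) \<times> Adm (dim_col M)) (\<lambda>((\<sigma>1, \<sigma>2), (\<tau>1, \<tau>2)).
       Phi_fibre (contract M \<sigma>1 \<tau>1) X1 Y1 m1 \<times> Phi_fibre (contract M \<sigma>2 \<tau>2) X2 Y2 m2)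
   = regroup -` ((merge_data X1 X2 (dim_row M) \<times> merge_data Y1 Y2 (dim_col M))
       \<inter> merge_pair (dim_row M) (dim_col M) -` proj_fibre M X1 X2 Y1 Y2 m1 m2)"
    (is "?Sig = regroup -` ?D")
proof (rule Set.set_eqI)
  fix x :: "(((nat \<Rightarrow> nat) \<times> (nat \<Rightarrow> nat)) \<times> ((nat \<Rightarrow> nat) \<times> (nat \<Rightarrow> nat))) \<times>
      ('x1 list \<times> 'y1 list) \<times> ('x2 list \<times> 'y2 list)"
  obtain \<sigma>1 \<sigma>2 \<tau>1 \<tau>2 as cs bs ds where x: "x = (((\<sigma>1, \<sigma>2), (\<tau>1, \<tau>2)), ((as, cs), (bs, ds)))"
    by (metis prod.exhaust)
  have "x \<in> ?Sig \<longleftrightarrow>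
      (\<sigma>1, \<sigma>2, as, bs) \<in> merge_data X1 X2 (dim_row M) \<and> (\<tau>1, \<tau>2, cs, ds) \<in> merge_data Y1 Y2 (dim_col M)
      \<and> monom_of (contract M \<sigma>1 \<tau>1) as cs = m1 \<and> monom_of (contract M \<sigma>2 \<tau>2) bs ds = m2"
    unfolding x Phi_fibre_def merge_data_def by auto
  also have "\<dots> \<longleftrightarrow> regroup x \<in> ?D"
    unfolding x regroup_def merge_pair_def proj_fibre_def
    using proj1_monom_of_merge_seq[of \<sigma>1 \<sigma>2 as bs X1 X2 M \<tau>1 \<tau>2 cs ds Y1 Y2]
      proj2_monom_of_merge_seq[of \<sigma>1 \<sigma>2 as bs X1 X2 M \<tau>1 \<tau>2 cs ds Y1 Y2]
      merge_seq_in_incr_seqs[of \<sigma>1 \<sigma>2 as bs X1 X2 "dim_row M"]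
      merge_seq_in_incr_seqs[of \<tau>1 \<tau>2 cs ds Y1 Y2 "dim_col M"]
    by auto
  finally show "x \<in> ?Sig \<longleftrightarrow> x \<in> regroup -` ?D" by simp
qed

lemma Adm_sum_eq_card_proj_fibre:
  fixes X1 :: "'x1::linorder set" and X2 :: "'x2::linorder set"
    and Y1 :: "'y1::linorder set" and Y2 :: "'y2::linorder set"
  assumes "packed M"
  shows "(\<Sum>(\<sigma>1, \<sigma>2)\<in>Adm (dim_row M). \<Sum>(\<tau>1, \<tau>2)\<in>Adm (dim_col M).
       tensor (Phi (contract M \<sigma>1 \<tau>1) X1 Y1) (Phi (contract M \<sigma>2 \<tau>2) X2 Y2) (m1, m2))
    = of_nat (card (proj_fibre M X1 X2 Y1 Y2 m1 m2))"
proof -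
  let ?I = "Adm (dim_row M) \<times> Adm (dim_col M)"
  define G where "G = (\<lambda>((\<sigma>1, \<sigma>2), (\<tau>1, \<tau>2)).
    Phi_fibre (contract M \<sigma>1 \<tau>1) X1 Y1 m1 \<times> Phi_fibre (contract M \<sigma>2 \<tau>2) X2 Y2 m2)"
  let ?D = "(merge_data X1 X2 (dim_row M) \<times> merge_data Y1 Y2 (dim_col M))
    \<inter> merge_pair (dim_row M) (dim_col M) -` proj_fibre M X1 X2 Y1 Y2 m1 m2"
  have Sig: "Sigma ?I G = regroup -` ?D"
    unfolding G_def by (rule Sigma_Phi_fibre_eq_vimage_regroup)
  have bij_D: "bij_betw (merge_pair (dim_row M) (dim_col M)) ?D (proj_fibre M X1 X2 Y1 Y2 m1 m2)"
    by (rule bij_betw_merge_pair_proj_fibre)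
  have fin_Sig: "finite (Sigma ?I G)"
    unfolding Sig using bij_betw_finite[OF bij_D] finite_proj_fibre[OF assms] bij_is_inj[OF bij_regroup]
    by (intro finite_vimageI) simp_all
  have fin_G: "\<forall>p\<in>?I. finite (G p)"
  proof
    fix p assume "p \<in> ?I"
    then have "G p \<subseteq> snd ` Sigma ?I G" by force
    then show "finite (G p)" by (rule finite_surj[OF fin_Sig])
  qed
  have "(\<Sum>(\<sigma>1, \<sigma>2)\<in>Adm (dim_row M). \<Sum>(\<tau>1, \<tau>2)\<in>Adm (dim_col M).
       tensor (Phi (contract M \<sigma>1 \<tau>1) X1 Y1) (Phi (contract M \<sigma>2 \<tau>2) X2 Y2) (m1, m2))
      = (\<Sum>p\<in>?I. of_nat (card (G p)))"
    by (simp add: sum.cartesian_product split_beta G_def tensor_def Phi_eq_card_Phi_fibre card_cartesian_product)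
  also have "\<dots> = of_nat (card (Sigma ?I G))"
    using card_SigmaI[OF finite_cartesian_product[OF finite_Adm finite_Adm] fin_G] by simp
  also have "card (Sigma ?I G) = card ?D"
    unfolding Sig using bij_is_inj[OF bij_regroup] by (rule card_vimage_inj) (simp add: bij_is_surj[OF bij_regroup])
  also have "\<dots> = card (proj_fibre M X1 X2 Y1 Y2 m1 m2)"
    by (rule bij_betw_same_card[OF bij_D])
  finally show ?thesis .
qed

theorem mainTheorem15:
  fixes X1 :: "'x1::linorder set" and X2 :: "'x2::linorder set"
    and Y1 :: "'y1::linorder set" and Y2 :: "'y2::linorder set"
    and M :: "nat mat"
  assumes "countable X1" and "countable X2" and "countable Y1" and "countable Y2"
    and "packed M"
  shows "iota (Phi M (X1 \<times> X2) (Y1 \<times> Y2)) = (\<lambda>mm.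
    \<Sum>(s1, s2)\<in>Adm (dim_row M). \<Sum>(t1, t2)\<in>Adm (dim_col M).
       tensor (Phi (mu (dim_row M) s1 * M * transpose_mat (mu (dim_col M) t1)) X1 Y1)
              (Phi (mu (dim_row M) s2 * M * transpose_mat (mu (dim_col M) t2)) X2 Y2) mm)"
proof
  fix mm :: "('x1 \<times> 'y1 \<Rightarrow> nat) \<times> ('x2 \<times> 'y2 \<Rightarrow> nat)"
  obtain m1 m2 where mm: "mm = (m1, m2)" by (cases mm)
  show "iota (Phi M (X1 \<times> X2) (Y1 \<times> Y2)) mm =
    (\<Sum>(s1, s2)\<in>Adm (dim_row M). \<Sum>(t1, t2)\<in>Adm (dim_col M).
       tensor (Phi (mu (dim_row M) s1 * M * transpose_mat (mu (dim_col M) t1)) X1 Y1)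
              (Phi (mu (dim_row M) s2 * M * transpose_mat (mu (dim_col M) t2)) X2 Y2) mm)"
    unfolding mm iota_Phi_eq_card_proj_fibre[OF \<open>packed M\<close>]
      Adm_sum_eq_card_proj_fibre[OF \<open>packed M\<close>, unfolded contract_def] ..
qed

end
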